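(* Let $L=\langle S,A,\to\rangle$ be a labelled transition system. For every $x,y\in\{o,b\}$ and $\bar s,\bar t\in S$, we have $\bar s\mathrel{\underline{\leftrightarrow}}_{(x,y)}\bar t$ if and only if $\bar s\,R\,\bar t$ for some symmetric relation $R\subseteq S\times S$ such that whenever $s\,R\,t$ and $s\xrightarrow{a}s'$, either $a=\tau$ and $s'\,R\,t$, or there exist states $t',t_1,t_2$ with $t\Longrightarrow_{x,R,s}t_1\xrightarrow{a}t_2\Longrightarrow_{y,R,s'}t'$ and $s'\,R\,t'$.
   Context: An LTS is $\langle S,A,\to\rangle$ with states $S$, actions $A$ containing the internal action $\tau$, and $\to\subseteq S\times A\times S$; write $s\xrightarrow{a}t$, and $\twoheadrightarrow$ for the reflexive-transitive closure of $\xrightarrow{\tau}$. For $R\subseteq S\times S$ and $s,s',t$: $s\twoheadrightarrow_{o,R,t}s'$ iff $s\twoheadrightarrow s'$; $s\twoheadrightarrow_{b,R,t}s'$ iff $s\twoheadrightarrow s'$, $t\,R\,s$ and $t\,R\,s'$. Further, $s\Longrightarrow_{o,R,t}s'$ iff $s\twoheadrightarrow s'$, and $s\Longrightarrow_{b,R,t}s'$ iff there is a finite sequence $s=s_0\xrightarrow{\tau}s_1\xrightarrow{\tau}\cdots\xrightarrow{\tau}s_n=s'$ with $t\,R\,s_i$ for all $i$. For $x,y\in\{o,b\}$, a symmetric $R$ is an $(x,y)$-generic bisimulation if whenever $s\,R\,t$ and $s\xrightarrow{a}s'$, either $a=\tau$ and $s'\,R\,t$, or there exist $t',t_1,t_2$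 with $t\twoheadrightarrow_{x,R,s}t_1\xrightarrow{a}t_2\twoheadrightarrow_{y,R,s'}t'$ and $s'\,R\,t'$. $s\mathrel{\underline{\leftrightarrow}}_{(x,y)}t$ iff some $(x,y)$-generic bisimulation relates $s$ and $t$. *)

theory Defs
  imports Main
begin

text \<open>An LTS over states 's and actions 'a is given by a transition predicate
  tr s a t (meaning s --a--> t) together with a designated internal action tau.\<close>

datatype mode = Om | Bm

definition tau_steps :: "('s \<Rightarrow> 'a \<Rightarrow> 's \<Rightarrow> bool) \<Rightarrow> 'a \<Rightarrow> 's \<Rightarrow> 's \<Rightarrow> bool" where
  "tau_steps tr tau = (\<lambda>s t. tr s tau t)\<^sup>*\<^sup>*"

definition ttrans :: "('s \<Rightarrow> 'a \<Rightarrow> 's \<Rightarrow> bool) \<Rightarrow> 'a \<Rightarrow> mode \<Rightarrow> ('s \<Rightarrow> 's \<Rightarrow> bool) \<Rightarrow> 's \<Rightarrow> 's \<Rightarrow> 's \<Rightarrow> bool" where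
  "ttrans tr tau x R t s s' = (case x of
      Om \<Rightarrow> tau_steps tr tau s s'
    | Bm \<Rightarrow> tau_steps tr tau s s' \<and> R t s \<and> R t s')"

definition wtrans :: "('s \<Rightarrow> 'a \<Rightarrow> 's \<Rightarrow> bool) \<Rightarrow> 'a \<Rightarrow> mode \<Rightarrow> ('s \<Rightarrow> 's \<Rightarrow> bool) \<Rightarrow> 's \<Rightarrow> 's \<Rightarrow> 's \<Rightarrow> bool" where
  "wtrans tr tau x R t s s' = (case x of
      Om \<Rightarrow> tau_steps tr tau s s'
    | Bm \<Rightarrow> (\<exists>n f. f 0 = s \<and> f n = s' \<and> (\<forall>i<n. tr (f i) tau (f (Suc i))) \<and> (\<forall>i\<le>n. R t (f i))))"

definition generic_bisim :: "('s \<Rightarrow> 'a \<Rightarrow> 's \<Rightarrow> bool) \<Rightarrow> 'a \<Rightarrow> mode \<Rightarrow> mode \<Rightarrow> ('s \<Rightarrow> 's \<Rightarrow> bool) \<Rightarrow> bool" where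
  "generic_bisim tr tau x y R \<longleftrightarrow> symp R \<and>
     (\<forall>s t a s'. R s t \<and> tr s a s' \<longrightarrow>
        (a = tau \<and> R s' t) \<or>
        (\<exists>t' t1 t2. ttrans tr tau x R s t t1 \<and> tr t1 a t2 \<and> ttrans tr tau y R s' t2 t' \<and> R s' t'))"

definition generic_bisimilar :: "('s \<Rightarrow> 'a \<Rightarrow> 's \<Rightarrow> bool) \<Rightarrow> 'a \<Rightarrow> mode \<Rightarrow> mode \<Rightarrow> 's \<Rightarrow> 's \<Rightarrow> bool" where
  "generic_bisimilar tr tau x y s t \<longleftrightarrow> (\<exists>R. generic_bisim tr tau x y R \<and> R s t)"

end

theory Submission
  imports Defs
begin

text \<open>Relax generic bisimulations so that an internal move may also be answered by a
  sequence of internal steps; the relaxed answers are then closed under prefixing the answering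
  state by internal steps. Every generic bisimulation is relaxed, so it suffices to show that the
  largest relaxed bisimulation \<open>B\<close> satisfies the stronger matching condition with \<open>\<Longrightarrow>\<close>. This
  follows from stuttering: if \<open>s B t\<close>, \<open>s B t'\<close> and \<open>t \<twoheadrightarrow> u \<twoheadrightarrow> t'\<close>, then \<open>s B u\<close>, because adding
  all such pairs \<open>(s, u)\<close> to \<open>B\<close> still gives a relaxed bisimulation. Hence the condition
  \<open>t R s\<close>, \<open>t R s'\<close> on the endpoints of a path \<open>s \<twoheadrightarrow> s'\<close> propagates to all its states.\<close>

lemma rtranclp_path_segment:
  assumes "\<forall>k<n. r (f k) (f (Suc k))" and "i \<le> j" and "j \<le> n"
  shows "r\<^sup>*\<^sup>* (f i) (f j)"
  using assms(2,3)
proof (induction j)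
  case (Suc j)
  show ?case
  proof (cases "i = Suc j")
    case False
    with Suc have "r\<^sup>*\<^sup>* (f i) (f j)" by simp
    with assms(1) Suc.prems show ?thesis by (meson Suc_le_lessD rtranclp.rtrancl_into_rtrancl)
  qed simp
qed simp

lemma rtranclp_path_through:
  assumes "r\<^sup>*\<^sup>* a b" and "\<And>z. r\<^sup>*\<^sup>* a z \<Longrightarrow> r\<^sup>*\<^sup>* z b \<Longrightarrow> P z"
  obtains n f where "f 0 = a" "f n = b" "\<forall>i<n. r (f i) (f (Suc i))" "\<forall>i\<le>n. P (f i)"
proof -
  obtain n f where f: "f 0 = a" "f n = b" "\<forall>i<n. r (f i) (f (Suc i))"
    using assms(1) by (auto simp: rtranclp_power relpowp_fun_conv)
  have "\<forall>i\<le>n. P (f i)"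
    using rtranclp_path_segment[where r = r and f = f, OF f(3)] f(1,2) assms(2)
    by (metis le0 order_refl)
  with f show thesis by (rule that)
qed

context
  fixes tr :: "'s \<Rightarrow> 'a \<Rightarrow> 's \<Rightarrow> bool" and tau :: 'a
begin

lemma ttrans_iff:
  "ttrans tr tau m R t s s' \<longleftrightarrow> tau_steps tr tau s s' \<and> (m = Bm \<longrightarrow> R t s \<and> R t s')"
  unfolding ttrans_def by (cases m) auto

lemma ttrans_if_wtrans:
  assumes "wtrans tr tau m R t s s'"
  shows "ttrans tr tau m R t s s'"
proof (cases m)
  case Om
  with assms show ?thesis unfolding wtrans_def ttrans_def by simp
next
  case Bm
  with assms obtain n f where f: "f 0 = s" "f n = s'" "\<forall>i<n. tr (f i) tau (f (Suc i))"
    "\<forall>i\<le>n. R t (f i)"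
    unfolding wtrans_def by auto
  have "tau_steps tr tau s s'"
    using rtranclp_path_segment[where f = f and i = 0 and j = n, OF f(3)] f(1,2)
    by (simp add: tau_steps_def)
  with f Bm show ?thesis unfolding ttrans_iff by (metis le0 order_refl)
qed

lemma wtrans_if_tau_steps:
  assumes "tau_steps tr tau s s'"
    and "\<And>z. m = Bm \<Longrightarrow> tau_steps tr tau s z \<Longrightarrow> tau_steps tr tau z s' \<Longrightarrow> R t z"
  shows "wtrans tr tau m R t s s'"
proof (cases m)
  case Om
  with assms(1) show ?thesis unfolding wtrans_def by simp
next
  case Bm
  obtain n f where "f 0 = s" "f n = s'" "\<forall>i<n. tr (f i) tau (f (Suc i))"
    "\<forall>i\<le>n. R t (f i)"
    using assms(1)[unfolded tau_steps_def]
    by (rule rtranclp_path_through[where P = "R t"]) (use assms(2) Bm in \<open>simp add: tau_steps_def\<close>)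
  with Bm show ?thesis unfolding wtrans_def by auto
qed

context
  fixes x y :: mode
begin

text \<open>Unlike in \<open>generic_bisim\<close>, an internal move of \<open>s\<close> may be answered by internal
  steps of \<open>t\<close>, not only by \<open>t\<close> staying put.\<close>

definition weak_answer :: "('s \<Rightarrow> 's \<Rightarrow> bool) \<Rightarrow> 's \<Rightarrow> 's \<Rightarrow> 'a \<Rightarrow> 's \<Rightarrow> bool" where
  "weak_answer R s t a s' \<longleftrightarrow>
     (a = tau \<and> (\<exists>t'. ttrans tr tau x R s t t' \<and> R s' t')) \<or>
     (\<exists>t1 t2 t'. ttrans tr tau x R s t t1 \<and> tr t1 a t2 \<and> ttrans tr tau y R s' t2 t' \<and> R s' t')"

definition relaxed_bisim :: "('s \<Rightarrow> 's \<Rightarrow> bool) \<Rightarrow> bool" where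
  "relaxed_bisim R \<longleftrightarrow> symp R \<and> (\<forall>s t a s'. R s t \<and> tr s a s' \<longrightarrow> weak_answer R s t a s')"

definition relaxed_bisimilar :: "'s \<Rightarrow> 's \<Rightarrow> bool" where
  "relaxed_bisimilar s t \<longleftrightarrow> (\<exists>R. relaxed_bisim R \<and> R s t)"

lemma weak_answer_mono:
  "weak_answer R s t a s' \<Longrightarrow> (\<And>u v. R u v \<Longrightarrow> R' u v) \<Longrightarrow> weak_answer R' s t a s'"
  unfolding weak_answer_def ttrans_iff by blast

lemma weak_answer_tau_prefix:
  assumes "R s t" and "tau_steps tr tau t u" and "weak_answer R s u a s'"
  shows "weak_answer R s t a s'"
  using assms unfolding weak_answer_def ttrans_iff tau_steps_def by (meson rtranclp_trans)

lemma relaxed_bisim_if_generic_bisim: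
  assumes "generic_bisim tr tau x y R"
  shows "relaxed_bisim R"
  unfolding relaxed_bisim_def
proof (intro conjI allI impI)
  show "symp R" using assms unfolding generic_bisim_def by blast
next
  fix s t a s' assume "R s t \<and> tr s a s'"
  with assms have "ttrans tr tau x R s t t" and
    "(a = tau \<and> R s' t) \<or>
     (\<exists>t' t1 t2. ttrans tr tau x R s t t1 \<and> tr t1 a t2 \<and> ttrans tr tau y R s' t2 t' \<and> R s' t')"
    unfolding generic_bisim_def ttrans_iff tau_steps_def by auto
  then show "weak_answer R s t a s'" unfolding weak_answer_def by blast
qed

lemma relaxed_bisimilar_sym: "relaxed_bisimilar s t \<Longrightarrow> relaxed_bisimilar t s"
  unfolding relaxed_bisimilar_def relaxed_bisim_def by (blast dest: sympD)

lemma relaxed_bisimilar_weak_answer: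
  assumes "relaxed_bisimilar s t" and "tr s a s'"
  shows "weak_answer relaxed_bisimilar s t a s'"
proof -
  from assms(1) obtain R where "relaxed_bisim R" "R s t" unfolding relaxed_bisimilar_def by blast
  with assms(2) have "weak_answer R s t a s'" unfolding relaxed_bisim_def by blast
  then show ?thesis
    by (rule weak_answer_mono) (use \<open>relaxed_bisim R\<close> in \<open>auto simp: relaxed_bisimilar_def\<close>)
qed

lemma relaxed_bisim_relaxed_bisimilar: "relaxed_bisim relaxed_bisimilar"
  unfolding relaxed_bisim_def
  using relaxed_bisimilar_sym relaxed_bisimilar_weak_answer by (auto intro: sympI)

lemma relaxed_bisim_tau_steps:
  assumes "tau_steps tr tau q q'" and "relaxed_bisim R" and "R q r"
  obtains r' where "tau_steps tr tau r r'" and "R q' r'"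
proof -
  from assms(1) have "\<exists>r'. tau_steps tr tau r r' \<and> R q' r'"
    unfolding tau_steps_def
  proof (induction rule: rtranclp_induct)
    case base
    with assms(3) show ?case by blast
  next
    case (step q1 q2)
    then obtain r1 where r1: "(\<lambda>s t. tr s tau t)\<^sup>*\<^sup>* r r1" "R q1 r1"
      unfolding tau_steps_def by blast
    with step.hyps(2) assms(2) have "weak_answer R q1 r1 tau q2" unfolding relaxed_bisim_def by blast
    with r1(1) show ?case
      unfolding weak_answer_def ttrans_iff tau_steps_def
      by (meson rtranclp_trans converse_rtranclp_into_rtranclp)
  qed
  with that show thesis by blast
qed

lemma relaxed_bisimilar_stutter:
  assumes "relaxed_bisimilar s t" and "tau_steps tr tau t u" and "tau_steps tr tau u t'"
    and "relaxed_bisimilar s t'"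
  shows "relaxed_bisimilar s u"
proof -
  define Mid where "Mid s u \<longleftrightarrow> (\<exists>t t'. tau_steps tr tau t u \<and> tau_steps tr tau u t' \<and>
    relaxed_bisimilar s t \<and> relaxed_bisimilar s t')" for s u
  define R where "R u v \<longleftrightarrow> relaxed_bisimilar u v \<or> Mid u v \<or> Mid v u" for u v
  have from_bisimilar: "relaxed_bisimilar u v \<Longrightarrow> R u v" for u v unfolding R_def by blast
  have "relaxed_bisim R"
    unfolding relaxed_bisim_def
  proof (intro conjI allI impI)
    show "symp R" unfolding R_def by (auto intro!: sympI dest: relaxed_bisimilar_sym)
  next
    fix u v a u' assume uv: "R u v \<and> tr u a u'"
    have "\<exists>w. tau_steps tr tau v w \<and> relaxed_bisimilar u w"
      using uv unfolding R_def
    proof (elim conjE disjE)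
      assume "Mid v u"
      then obtain t where "tau_steps tr tau t u" "relaxed_bisimilar t v"
        unfolding Mid_def by (blast dest: relaxed_bisimilar_sym)
      then show ?thesis by (metis relaxed_bisim_tau_steps relaxed_bisim_relaxed_bisimilar)
    qed (auto simp: Mid_def tau_steps_def)
    then obtain w where "tau_steps tr tau v w" "relaxed_bisimilar u w" by blast
    with uv have "weak_answer R u w a u'"
      by (blast intro: weak_answer_mono relaxed_bisimilar_weak_answer from_bisimilar)
    with uv \<open>tau_steps tr tau v w\<close> show "weak_answer R u v a u'"
      by (blast intro: weak_answer_tau_prefix)
  qed
  moreover have "R s u" using assms unfolding R_def Mid_def by blast
  ultimately show ?thesis unfolding relaxed_bisimilar_def by blast
qed

lemma wtrans_if_ttrans_relaxed_bisimilar: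
  assumes "ttrans tr tau m relaxed_bisimilar s u v"
  shows "wtrans tr tau m relaxed_bisimilar s u v"
  using assms unfolding ttrans_iff
  by (blast intro: wtrans_if_tau_steps relaxed_bisimilar_stutter)

lemma relaxed_bisimilar_wtrans_answer:
  assumes "relaxed_bisimilar s t" and "tr s a s'"
  shows "(a = tau \<and> relaxed_bisimilar s' t) \<or>
    (\<exists>t' t1 t2. wtrans tr tau x relaxed_bisimilar s t t1 \<and> tr t1 a t2 \<and>
       wtrans tr tau y relaxed_bisimilar s' t2 t' \<and> relaxed_bisimilar s' t')"
  using relaxed_bisimilar_weak_answer[OF assms] unfolding weak_answer_def
proof (elim disjE exE conjE)
  fix t' assume tau: "a = tau" and tt': "ttrans tr tau x relaxed_bisimilar s t t'"
    and s't': "relaxed_bisimilar s' t'"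
  then have "tau_steps tr tau t t'" by (simp add: ttrans_iff)
  then consider "t = t'" | w where "tau_steps tr tau t w" "tr w tau t'"
    unfolding tau_steps_def by (blast elim: rtranclp.cases)
  then show ?thesis
  proof cases
    case 2
    have "tau_steps tr tau w t'" using 2(2) unfolding tau_steps_def by (rule r_into_rtranclp)
    with tt' 2(1) assms(1) have "ttrans tr tau x relaxed_bisimilar s t w"
      using relaxed_bisimilar_stutter unfolding ttrans_iff by blast
    moreover have "ttrans tr tau y relaxed_bisimilar s' t' t'"
      using s't' unfolding ttrans_iff tau_steps_def by blast
    ultimately show ?thesis
      using tau 2(2) s't' by (blast intro: wtrans_if_ttrans_relaxed_bisimilar)
  qed (use tau s't' in blast)
qed (blast intro: wtrans_if_ttrans_relaxed_bisimilar)

end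

end

theorem theorem4p9:
  fixes tr :: "'s \<Rightarrow> 'a \<Rightarrow> 's \<Rightarrow> bool" and tau :: 'a
    and x y :: mode and s0 t0 :: 's
  shows "generic_bisimilar tr tau x y s0 t0 \<longleftrightarrow>
    (\<exists>R. symp R \<and> R s0 t0 \<and>
       (\<forall>s t a s'. R s t \<and> tr s a s' \<longrightarrow>
          (a = tau \<and> R s' t) \<or>
          (\<exists>t' t1 t2. wtrans tr tau x R s t t1 \<and> tr t1 a t2 \<and> wtrans tr tau y R s' t2 t' \<and> R s' t')))"
    (is "_ \<longleftrightarrow> (\<exists>R. ?wbisim R)")
proof
  assume "generic_bisimilar tr tau x y s0 t0"
  then obtain R where R: "generic_bisim tr tau x y R" and "R s0 t0"
    unfolding generic_bisimilar_def by blast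
  from relaxed_bisim_if_generic_bisim[OF R] \<open>R s0 t0\<close> have "relaxed_bisimilar tr tau x y s0 t0"
    unfolding relaxed_bisimilar_def by blast
  moreover have "symp (relaxed_bisimilar tr tau x y)"
    using relaxed_bisim_relaxed_bisimilar[of tr tau x y] unfolding relaxed_bisim_def ..
  moreover note relaxed_bisimilar_wtrans_answer[of tr tau x y]
  ultimately have "?wbisim (relaxed_bisimilar tr tau x y)" by blast
  then show "\<exists>R. ?wbisim R" by (rule exI[where x = "relaxed_bisimilar tr tau x y"])
next
  assume "\<exists>R. ?wbisim R"
  then obtain R where "?wbisim R" ..
  then have "generic_bisim tr tau x y R"
    unfolding generic_bisim_def by (metis ttrans_if_wtrans)
  with \<open>?wbisim R\<close> show "generic_bisimilar tr tau x y s0 t0"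
    unfolding generic_bisimilar_def by blast
qed

end
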